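(* Let $P:\mathbb{R}^d\to\mathbb{R}$ be a positive homogeneous function and let $E_1,E_2\in\mathrm{Exp}(P)$. Then $\mathrm{tr}\,E_1=\mathrm{tr}\,E_2>0$.
   Context: For $E\in\mathrm{End}(\mathbb{R}^d)$ and $t>0$ set $t^E:=\exp(\log(t)E)$. A function $P:\mathbb{R}^d\to\mathbb{C}$ is homogeneous with respect to $E$ if $P(t^E\xi)=tP(\xi)$ for all $t>0$, $\xi\in\mathbb{R}^d$; $\mathrm{Exp}(P)$ is the set of all such $E$. A real-valued $P$ is positive definite if $P\ge 0$ and $P(\xi)=0$ only when $\xi=0$. $P:\mathbb{R}^d\to\mathbb{R}$ is positive homogeneous if it is continuous, positive definite, $\mathrm{Exp}(P)\neq\emptyset$, and $S_P=\{\eta:P(\eta)=1\}$ is compact. (Known fact that may be used: for positive homogeneous $P$ and every $E\in\mathrm{Exp}(P)$, $\lim_{t\to0}\|t^E\|=0$.) *)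

theory Defs
  imports "HOL-Analysis.Analysis"
begin

primrec mat_pow :: "real^'n^'n \<Rightarrow> nat \<Rightarrow> real^'n^'n" where
  "mat_pow A 0 = mat 1"
| "mat_pow A (Suc k) = A ** mat_pow A k"

definition mat_exp :: "real^'n^'n \<Rightarrow> real^'n^'n" where
  "mat_exp A = (\<Sum>k. (1 / fact k) *\<^sub>R mat_pow A k)"

definition mat_tpow :: "real \<Rightarrow> real^'n^'n \<Rightarrow> real^'n^'n" where
  "mat_tpow t E = mat_exp (ln t *\<^sub>R E)"

definition Exps :: "(real^'n \<Rightarrow> 'a::real_vector) \<Rightarrow> (real^'n^'n) set" where
  "Exps P = {E. \<forall>t>0. \<forall>\<xi>. P (mat_tpow t E *v \<xi>) = t *\<^sub>R P \<xi>}"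

definition pos_definite :: "(real^'n \<Rightarrow> real) \<Rightarrow> bool" where
  "pos_definite P \<longleftrightarrow> (\<forall>\<xi>. P \<xi> \<ge> 0) \<and> (\<forall>\<xi>. P \<xi> = 0 \<longrightarrow> \<xi> = 0)"

definition positive_homogeneous :: "(real^'n \<Rightarrow> real) \<Rightarrow> bool" where
  "positive_homogeneous P \<longleftrightarrow> continuous_on UNIV P \<and> pos_definite P \<and>
     Exps P \<noteq> {} \<and> compact {\<eta>. P \<eta> = 1}"

end

theory Submission
  imports Defs
begin

text \<open>Write \<open>m(r)\<close> for the Lebesgue measure of the compact sublevel set \<open>{P \<le> r}\<close>.
For \<open>E \<in> Exp(P)\<close> the map \<open>t\<^sup>E\<close> carries \<open>{P \<le> r}\<close> onto \<open>{P \<le> t r}\<close>, so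
\<open>m(t r) = |det t\<^sup>E| m(r)\<close>. Hence \<open>f(s) = m(e\<^sup>s) / m(1)\<close> is multiplicative, and its derivative at
\<open>0\<close> is that of \<open>det exp(sE)\<close>, namely \<open>tr E\<close>; therefore \<open>m(t) = t\<^bsup>tr E\<^esup> m(1)\<close>. Since \<open>m\<close> does
not depend on \<open>E\<close>, all exponents have the same trace, and since \<open>m\<close> is strictly increasing,
that trace is positive.\<close>

section \<open>Lebesgue measure of linear images\<close>

text \<open>\<open>Change_Of_Vars.measure_linear_image\<close> is stated only for index types of sort
\<open>wellorder\<close>; its reduction to elementary linear maps works for any finite index type.\<close>

definition scales_lmeasure_by_det :: "(real^'n \<Rightarrow> real^'n) \<Rightarrow> bool" where
  "scales_lmeasure_by_det f \<longleftrightarrow> (\<forall>S \<in> lmeasurable.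
     f ` S \<in> lmeasurable \<and> measure lebesgue (f ` S) = \<bar>det (matrix f)\<bar> * measure lebesgue S)"

lemma scales_lmeasure_by_detI_cbox:
  fixes f :: "real^'n \<Rightarrow> real^'n"
  assumes "linear f"
    and "\<And>a b. measure lebesgue (f ` cbox a b) = \<bar>det (matrix f)\<bar> * measure lebesgue (cbox a b)"
  shows "scales_lmeasure_by_det f"
  using measure_linear_sufficient[OF assms(1) _ assms(2)]
  by (simp add: scales_lmeasure_by_det_def)

lemma scales_lmeasure_by_det_swap:
  fixes m n :: "'n::finite"
  shows "scales_lmeasure_by_det (\<lambda>x::real^'n. \<chi> i. x $ Transposition.transpose m n i)"
    (is "scales_lmeasure_by_det ?h")
proof (rule scales_lmeasure_by_detI_cbox)
  show lin: "linear ?h"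
    by (rule linearI) (simp_all add: vec_eq_iff)
  have "matrix ?h = (\<chi> i j. mat 1 $ i $ Transposition.transpose m n j)"
    unfolding matrix_def axis_def mat_def
    by (simp add: vec_eq_iff eq_commute[of _ "Transposition.transpose m n _"] transpose_eq_iff)
  then have det: "\<bar>det (matrix ?h)\<bar> = 1"
    by (simp add: det_permute_columns permutes_swap_id sign_swap_id)
  show "measure lebesgue (?h ` cbox a b) = \<bar>det (matrix ?h)\<bar> * measure lebesgue (cbox a b)" for a b
  proof (cases "cbox a b = {}")
    case False
    have image: "?h ` cbox a b = cbox (?h a) (?h b)"
      by (auto simp: image_iff lambda_swap_Galois mem_box_cart) (metis transpose_involutory)+
    with False have "cbox (?h a) (?h b) \<noteq> {}"
      by auto
    moreover have "(\<Prod>i\<in>UNIV. (b - a) $ Transposition.transpose m n i) = (\<Prod>i\<in>UNIV. (b - a) $ i)"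
      using prod.permute[OF permutes_swap_id[of m UNIV n], of "\<lambda>i. (b - a) $ i"] by (simp add: o_def)
    ultimately show ?thesis
      using False det by (simp add: image content_cbox_cart)
  qed simp
qed

lemma scales_lmeasure_by_det_shear:
  fixes m n :: "'n::finite"
  assumes "m \<noteq> n"
  shows "scales_lmeasure_by_det (\<lambda>x::real^'n. \<chi> i. if i = m then x $ m + x $ n else x $ i)"
    (is "scales_lmeasure_by_det ?h")
proof (rule scales_lmeasure_by_detI_cbox)
  show lin: "linear ?h"
    by (rule linearI) (auto simp: algebra_simps vec_eq_iff)
  have "matrix ?h = (\<chi> k. if k = m then row m (mat 1) + 1 *s row n (mat 1) else row k (mat 1))"
    using \<open>m \<noteq> n\<close> by (auto simp: vec_eq_iff matrix_def axis_def row_def mat_def)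
  then have det: "det (matrix ?h) = 1"
    using det_row_operation[OF \<open>m \<noteq> n\<close>, where c=1 and A="mat 1 :: real^'n^'n"] by simp
  show "measure lebesgue (?h ` cbox a b) = \<bar>det (matrix ?h)\<bar> * measure lebesgue (cbox a b)" for a b
  proof (cases "cbox a b = {}")
    case False
    \<comment> \<open>\<open>measure_shear_interval\<close> needs a box with \<open>0 \<le> a$n\<close>; translate by \<open>c\<close> to get one\<close>
    define c :: "real^'n" where "c = (\<chi> i. if i = n then - a $ n else 0)"
    have box: "cbox a b = (+) (- c) ` cbox (c + a) (c + b)"
      by (simp add: cbox_translation image_image)
    have "?h ` cbox a b = (+) (?h (- c)) ` ?h ` cbox (c + a) (c + b)"
      unfolding box image_image using linear_add[OF lin] by (simp add: add.commute)
    then have "measure lebesgue (?h ` cbox a b) = measure lebesgue (?h ` cbox (c + a) (c + b))"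
      by (simp add: measure_translation)
    also have "\<dots> = measure lebesgue (cbox (c + a) (c + b))"
      using False \<open>m \<noteq> n\<close> by (intro measure_shear_interval) (auto simp: cbox_translation c_def)
    also have "\<dots> = measure lebesgue (cbox a b)"
      by (simp add: cbox_translation measure_translation)
    finally show ?thesis
      using det by simp
  qed simp
qed

lemma scales_lmeasure_by_det_linear:
  fixes f :: "real^'n \<Rightarrow> real^'n"
  assumes "linear f"
  shows "scales_lmeasure_by_det f"
proof (rule induct_linear_elementary[OF assms])
  fix f g :: "real^'n \<Rightarrow> real^'n"
  assume "linear f" "linear g" and f: "scales_lmeasure_by_det f" and g: "scales_lmeasure_by_det g"
  have "(f \<circ> g) ` S \<in> lmeasurable \<and>
        measure lebesgue ((f \<circ> g) ` S) = \<bar>det (matrix (f \<circ> g))\<bar> * measure lebesgue S"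
    if "S \<in> lmeasurable" for S
  proof -
    have "g ` S \<in> lmeasurable" "measure lebesgue (g ` S) = \<bar>det (matrix g)\<bar> * measure lebesgue S"
      using g that by (auto simp: scales_lmeasure_by_det_def)
    with f show ?thesis
      unfolding scales_lmeasure_by_det_def image_comp[symmetric]
        matrix_compose[OF \<open>linear g\<close> \<open>linear f\<close>]
      by (simp add: det_mul abs_mult del: image_image)
  qed
  then show "scales_lmeasure_by_det (f \<circ> g)"
    by (simp add: scales_lmeasure_by_det_def)
next
  fix f :: "real^'n \<Rightarrow> real^'n" and i
  assume "linear f" and "\<And>x. f x $ i = 0"
  then have "\<not> surj f"
    by (metis one_neq_zero surjD vec_component)
  then have "\<not> inj f"
    using linear_injective_imp_surjective[OF \<open>linear f\<close>] by blast
  then have "det (matrix f) = 0" and "negligible (f ` S)" for S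
    using det_nz_iff_inj[OF \<open>linear f\<close>] negligible_linear_singular_image[OF \<open>linear f\<close>] by auto
  then show "scales_lmeasure_by_det f"
    by (simp add: scales_lmeasure_by_det_def negligible_imp_measurable negligible_imp_measure0)
next
  fix c :: "'n \<Rightarrow> real"
  show "scales_lmeasure_by_det (\<lambda>x. \<chi> i. c i * x $ i)"
    by (simp add: scales_lmeasure_by_det_def measurable_stretch measure_stretch
        matrix_def axis_def det_diagonal)
qed (simp_all add: scales_lmeasure_by_det_swap scales_lmeasure_by_det_shear)

lemma measure_linear_image_cart:
  fixes f :: "real^'n \<Rightarrow> real^'n"
  assumes "linear f" and "S \<in> lmeasurable"
  shows "measure lebesgue (f ` S) = \<bar>det (matrix f)\<bar> * measure lebesgue S"
  using scales_lmeasure_by_det_linear[OF assms(1)] assms(2) by (simp add: scales_lmeasure_by_det_def)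

section \<open>The matrix exponential\<close>

definition mat_l1 :: "real^'n^'n \<Rightarrow> real" where
  "mat_l1 A = (\<Sum>i\<in>UNIV. \<Sum>j\<in>UNIV. \<bar>A$i$j\<bar>)"

lemma norm_le_mat_l1: "norm A \<le> mat_l1 A"
proof -
  have "norm A \<le> (\<Sum>i\<in>UNIV. norm (A$i))"
    unfolding norm_vec_def by (rule L2_set_le_sum) simp
  also have "\<dots> \<le> mat_l1 A"
    unfolding mat_l1_def by (intro sum_mono norm_le_l1_cart)
  finally show ?thesis .
qed

lemma abs_mat_pow_nth_le: "\<bar>mat_pow A k $ i $ j\<bar> \<le> mat_l1 A ^ k"
proof (induction k arbitrary: i j)
  case 0
  then show ?case by (simp add: mat_def)
next
  case (Suc k)
  have row: "(\<Sum>l\<in>UNIV. \<bar>A$i$l\<bar>) \<le> mat_l1 A"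
    unfolding mat_l1_def
    by (rule member_le_sum[where f="\<lambda>i. \<Sum>j\<in>UNIV. \<bar>A$i$j\<bar>"]) (auto intro: sum_nonneg)
  have "\<bar>mat_pow A (Suc k) $ i $ j\<bar> = \<bar>\<Sum>l\<in>UNIV. A$i$l * mat_pow A k $ l $ j\<bar>"
    by (simp add: matrix_matrix_mult_def)
  also have "\<dots> \<le> (\<Sum>l\<in>UNIV. \<bar>A$i$l\<bar>) * mat_l1 A ^ k"
    by (rule order_trans[OF sum_abs])
       (auto simp: abs_mult sum_distrib_right intro!: sum_mono mult_left_mono Suc.IH)
  also have "\<dots> \<le> mat_l1 A * mat_l1 A ^ k"
    using row by (intro mult_right_mono zero_le_power) (auto simp: mat_l1_def intro: sum_nonneg)
  finally show ?case by simp
qed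

lemma mat_pow_scaleR: "mat_pow (c *\<^sub>R A) k = c ^ k *\<^sub>R mat_pow A k"
  by (induction k) (simp_all add: vec_eq_iff matrix_matrix_mult_def sum_distrib_left algebra_simps)

lemma summable_mat_exp: "summable (\<lambda>k. (1 / fact k) *\<^sub>R mat_pow (A::real^'n^'n) k)"
proof (rule summable_comparison_test')
  show "summable (\<lambda>k. real CARD('n) ^ 2 * (inverse (fact k) * mat_l1 A ^ k))"
    by (intro summable_mult summable_exp)
  fix k
  have "norm ((1 / fact k) *\<^sub>R mat_pow A k) \<le> inverse (fact k) * mat_l1 (mat_pow A k)"
    using norm_le_mat_l1[of "mat_pow A k"] by (simp add: field_simps)
  also have "mat_l1 (mat_pow A k) \<le> (\<Sum>i\<in>(UNIV::'n set). \<Sum>j\<in>(UNIV::'n set). mat_l1 A ^ k)"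
    unfolding mat_l1_def[of "mat_pow A k"] by (intro sum_mono abs_mat_pow_nth_le)
  finally show "norm ((1 / fact k) *\<^sub>R mat_pow A k) \<le> real CARD('n) ^ 2 * (inverse (fact k) * mat_l1 A ^ k)"
    by (simp add: power2_eq_square mult_ac)
qed

lemma mat_exp_nth:
  fixes A :: "real^'n^'n"
  shows "mat_exp A $ i $ j = (\<Sum>k. mat_pow A k $ i $ j / fact k)"
proof -
  have "bounded_linear (\<lambda>M::real^'n^'n. M $ i $ j)"
    using bounded_linear_compose[OF bounded_linear_vec_nth bounded_linear_vec_nth] .
  from bounded_linear.suminf[OF this summable_mat_exp[of A]] show ?thesis
    by (simp add: mat_exp_def)
qed

lemma mat_exp_scaleR_nth:
  "mat_exp (s *\<^sub>R E) $ i $ j = (\<Sum>k. (mat_pow E k $ i $ j / fact k) * s ^ k)"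
  by (simp add: mat_exp_nth mat_pow_scaleR ac_simps)

lemma mat_exp_zero: "mat_exp 0 = (mat 1 :: real^'n^'n)"
proof -
  have "mat_exp (0 *\<^sub>R 0) $ i $ j = (mat 1 :: real^'n^'n) $ i $ j" for i j
    unfolding mat_exp_scaleR_nth powser_zero by (simp add: mat_def)
  then show ?thesis
    by (simp add: vec_eq_iff)
qed

lemma has_field_derivative_mat_exp_scaleR_nth:
  "((\<lambda>s. mat_exp (s *\<^sub>R E) $ i $ j) has_field_derivative E $ i $ j) (at 0)"
proof -
  define c where "c k = mat_pow E k $ i $ j / fact k" for k
  have "summable (\<lambda>k. c k * y ^ k)" for y
  proof (rule summable_comparison_test')
    show "summable (\<lambda>k. inverse (fact k) * (mat_l1 E * \<bar>y\<bar>) ^ k)"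
      by (rule summable_exp)
    show "norm (c k * y ^ k) \<le> inverse (fact k) * (mat_l1 E * \<bar>y\<bar>) ^ k" for k
      using abs_mat_pow_nth_le[of E k i j]
      by (simp add: c_def abs_mult power_abs power_mult_distrib divide_inverse mult_ac
               mult_left_mono mult_right_mono)
  qed
  moreover have "c 1 = E $ i $ j"
    by (simp add: c_def)
  ultimately show ?thesis
    using termdiffs_strong_converges_everywhere[of c 0]
    by (simp add: mat_exp_scaleR_nth diffs_def flip: c_def)
qed

lemma permutes_UNIV_fixing_all_but_one:
  assumes "p permutes UNIV" and "\<And>j. j \<noteq> i \<Longrightarrow> p j = j"
  shows "p = id"
  using permutes_superset[OF assms(1), of "{i}"] assms(2) by simp

lemma has_field_derivative_det_at_mat_1:
  fixes A :: "real \<Rightarrow> real^'n^'n"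
  assumes A0: "A 0 = mat 1"
    and A': "\<And>i j. ((\<lambda>s. A s $ i $ j) has_field_derivative D $ i $ j) (at 0)"
  shows "((\<lambda>s. det (A s)) has_field_derivative trace D) (at 0)"
proof -
  \<comment> \<open>\<open>L p\<close> is the derivative at \<open>0\<close> of the summand of \<open>det (A s)\<close> indexed by \<open>p\<close>\<close>
  define L where "L p = (\<Sum>i\<in>UNIV. D $ i $ p i * (\<Prod>j\<in>UNIV - {i}. mat 1 $ j $ p j :: real))"
    for p :: "'n \<Rightarrow> 'n"
  have deriv: "((\<lambda>s. \<Sum>p | p permutes UNIV. of_int (sign p) * (\<Prod>i\<in>UNIV. A s $ i $ p i))
         has_field_derivative (\<Sum>p | p permutes UNIV. of_int (sign p) * L p)) (at 0)"
    unfolding L_def by (intro DERIV_sum DERIV_cmult) (use has_field_derivative_prod[OF A'] A0 in simp)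
  have nonid_zero: "L p = 0" if "p permutes UNIV" "p \<noteq> id" for p
    unfolding L_def
  proof (intro sum.neutral ballI)
    fix i
    obtain j where "j \<noteq> i" "p j \<noteq> j"
      using permutes_UNIV_fixing_all_but_one[OF \<open>p permutes UNIV\<close>, of i] \<open>p \<noteq> id\<close> by blast
    then show "D $ i $ p i * (\<Prod>j\<in>UNIV - {i}. mat 1 $ j $ p j) = 0"
      by (auto simp: mat_def intro!: prod_zero bexI[of _ j])
  qed
  have "(\<Sum>p | p permutes UNIV. of_int (sign p) * L p) = of_int (sign id) * L id"
    by (subst sum.remove[of _ id])
       (auto simp: finite_permutations permutes_id nonid_zero intro!: sum.neutral)
  then have "(\<Sum>p | p permutes UNIV. of_int (sign p) * L p) = trace D"
    by (simp add: sign_id L_def trace_def mat_def)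
  then show ?thesis
    using deriv unfolding det_def by simp
qed

lemma has_field_derivative_abs_det_mat_exp:
  fixes E :: "real^'n^'n"
  shows "((\<lambda>s. \<bar>det (mat_exp (s *\<^sub>R E))\<bar>) has_field_derivative trace E) (at 0)"
proof -
  let ?g = "\<lambda>s. det (mat_exp (s *\<^sub>R E))"
  have g': "(?g has_field_derivative trace E) (at 0)"
    by (rule has_field_derivative_det_at_mat_1)
       (simp_all add: mat_exp_zero has_field_derivative_mat_exp_scaleR_nth)
  have "?g \<midarrow>0\<rightarrow> 1"
    using DERIV_isCont[OF g'] by (simp add: isCont_def mat_exp_zero)
  then have "eventually (\<lambda>s. ?g s > 0) (at 0)"
    by (rule order_tendstoD) simp
  then have "eventually (\<lambda>s. \<bar>?g s\<bar> = ?g s) (nhds 0)"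
    by (auto simp: eventually_at_filter mat_exp_zero elim!: eventually_mono)
  then show ?thesis
    using g' DERIV_cong_ev[OF refl _ refl, of "\<lambda>s. \<bar>?g s\<bar>" ?g] by simp
qed

section \<open>Sublevel sets of a positive homogeneous function\<close>

lemma Exps_scale:
  fixes P :: "real^'n \<Rightarrow> real"
  assumes "E \<in> Exps P" and "t > 0"
  shows "P (mat_tpow t E *v x) = t * P x"
  using assms unfolding Exps_def by simp

lemma Exps_zero:
  fixes P :: "real^'n \<Rightarrow> real"
  assumes "E \<in> Exps P"
  shows "P 0 = 0"
  using Exps_scale[OF assms, of 2 0] by simp

lemma bij_mat_tpow_Exps:
  fixes P :: "real^'n \<Rightarrow> real"
  assumes "pos_definite P" and E: "E \<in> Exps P" and t: "t > 0"
  shows "bij ((*v) (mat_tpow t E))"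
proof -
  have "inj ((*v) (mat_tpow t E))"
  proof (rule injI)
    fix x y
    assume "mat_tpow t E *v x = mat_tpow t E *v y"
    then have "t * P (x - y) = 0"
      using Exps_scale[OF E t, of "x - y"] Exps_zero[OF E]
      by (simp add: matrix_vector_mult_diff_distrib)
    then show "x = y"
      using \<open>pos_definite P\<close> t unfolding pos_definite_def by force
  qed
  with linear_injective_imp_surjective[OF matrix_vector_mul_linear this] show ?thesis
    by (simp add: bij_def)
qed

lemma mat_tpow_image_sublevel:
  fixes P :: "real^'n \<Rightarrow> real"
  assumes "pos_definite P" and E: "E \<in> Exps P" and t: "t > 0"
  shows "(*v) (mat_tpow t E) ` {x. P x \<le> r} = {x. P x \<le> t * r}"
proof -
  have "P (mat_tpow t E *v x) \<le> t * r \<longleftrightarrow> P x \<le> r" for x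
    using Exps_scale[OF E t] t by simp
  then show ?thesis
    using bij_mat_tpow_Exps[OF assms] by (auto simp: bij_def surj_def image_iff) metis
qed

lemma bounded_sublevel_one:
  fixes P :: "real^'n \<Rightarrow> real"
  assumes ph: "positive_homogeneous P" and E: "E \<in> Exps P"
  shows "bounded {x. P x \<le> 1}"
proof -
  have cont: "continuous_on UNIV P" and pd: "pos_definite P" and "compact {\<eta>. P \<eta> = 1}"
    using ph unfolding positive_homogeneous_def by auto
  have P_nonneg: "P x \<ge> 0" and P_eq_0: "P x = 0 \<longleftrightarrow> x = 0" for x
    using pd Exps_zero[OF E] unfolding pos_definite_def by auto
  obtain R where "R > 0" and R: "\<And>\<eta>. P \<eta> = 1 \<Longrightarrow> norm \<eta> \<le> R"
    using compact_imp_bounded[OF \<open>compact {\<eta>. P \<eta> = 1}\<close>] unfolding bounded_pos by auto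
  have sphere_ne: "sphere (0::real^'n) 1 \<noteq> {}"
    using vector_choose_size[of 1] by (auto simp: sphere_def)
  then obtain z0 where z0: "norm z0 = 1" and z0_min: "\<And>z. norm z = 1 \<Longrightarrow> P z0 \<le> P z"
    using continuous_attains_inf[OF compact_sphere sphere_ne continuous_on_subset[OF cont subset_UNIV]]
    by auto
  have "P z0 > 0"
    using z0 P_nonneg P_eq_0 by (metis less_eq_real_def norm_zero zero_neq_one)
  obtain \<rho> where "\<rho> > 0" and \<rho>: "\<And>x. P z0 \<le> P x \<Longrightarrow> \<rho> \<le> norm x"
  proof -
    have "isCont P 0"
      using cont by (simp add: continuous_on_eq_continuous_at)
    then obtain d where "d > 0" and d: "\<And>x. dist x 0 < d \<Longrightarrow> dist (P x) (P 0) < P z0"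
      using \<open>P z0 > 0\<close> unfolding continuous_at_eps_delta by blast
    have "d \<le> norm x" if "P z0 \<le> P x" for x
      using d[of x] that P_nonneg[of x] by (force simp: Exps_zero[OF E] dist_norm)
    with \<open>d > 0\<close> show ?thesis
      by (rule that)
  qed
  have "norm \<xi> \<le> R / \<rho>" if "P \<xi> \<le> 1" for \<xi>
  proof (cases "\<xi> = 0")
    case True
    then show ?thesis
      using \<open>R > 0\<close> \<open>\<rho> > 0\<close> by simp
  next
    case False
    define s where "s = P \<xi>"
    have s: "0 < s" "s \<le> 1"
      using False \<open>P \<xi> \<le> 1\<close> P_nonneg P_eq_0 by (auto simp: s_def less_eq_real_def)
    obtain \<eta> where \<xi>: "\<xi> = mat_tpow s E *v \<eta>"
      using bij_mat_tpow_Exps[OF pd E \<open>0 < s\<close>] by (metis bij_pointE)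
    have "s * P \<eta> = P \<xi>"
      using Exps_scale[OF E \<open>0 < s\<close>, of \<eta>] by (simp add: \<xi>)
    with s have "norm \<eta> \<le> R"
      by (intro R) (simp add: s_def)
    \<comment> \<open>\<open>\<xi> / |\<xi>|\<close> lies on the unit sphere and is the image of \<open>\<eta> / |\<xi>|\<close> under \<open>s\<^sup>E\<close>, \<open>s \<le> 1\<close>\<close>
    have "P z0 \<le> s * P (\<eta> /\<^sub>R norm \<xi>)"
      using z0_min[of "\<xi> /\<^sub>R norm \<xi>"] Exps_scale[OF E \<open>0 < s\<close>, of "\<eta> /\<^sub>R norm \<xi>"] False
      by (simp add: \<xi> matrix_vector_mult_scaleR)
    also have "\<dots> \<le> P (\<eta> /\<^sub>R norm \<xi>)"
      using s P_nonneg by (simp add: mult_left_le_one_le)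
    finally have "\<rho> \<le> norm (\<eta> /\<^sub>R norm \<xi>)"
      by (rule \<rho>)
    then show ?thesis
      using \<open>norm \<eta> \<le> R\<close> \<open>\<rho> > 0\<close> False by (simp add: field_simps)
  qed
  then show ?thesis
    unfolding bounded_iff by blast
qed

lemma compact_sublevel:
  fixes P :: "real^'n \<Rightarrow> real"
  assumes ph: "positive_homogeneous P" and E: "E \<in> Exps P"
  shows "compact {x. P x \<le> r}"
proof -
  have cont: "continuous_on UNIV P" and pd: "pos_definite P"
    using ph unfolding positive_homogeneous_def by auto
  define t where "t = max 1 r"
  have "bounded ((*v) (mat_tpow t E) ` {x. P x \<le> 1})"
    by (intro bounded_linear_image bounded_sublevel_one[OF ph E])
       (simp add: matrix_vector_mul_bounded_linear)
  then have "bounded {x. P x \<le> t}"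
    using mat_tpow_image_sublevel[OF pd E, of t 1] by (simp add: t_def)
  then have "bounded {x. P x \<le> r}"
    by (rule bounded_subset) (auto simp: t_def)
  moreover have "closed {x. P x \<le> r}"
    using closed_Collect_le[OF cont continuous_on_const] by simp
  ultimately show ?thesis
    by (simp add: compact_eq_bounded_closed)
qed

lemma measure_sublevel_scale:
  fixes P :: "real^'n \<Rightarrow> real"
  assumes ph: "positive_homogeneous P" and E: "E \<in> Exps P" and t: "t > 0"
  shows "measure lebesgue {x. P x \<le> t * r}
           = \<bar>det (mat_tpow t E)\<bar> * measure lebesgue {x. P x \<le> r}"
proof -
  have "pos_definite P"
    using ph unfolding positive_homogeneous_def by auto
  then have "measure lebesgue {x. P x \<le> t * r} = measure lebesgue ((*v) (mat_tpow t E) ` {x. P x \<le> r})"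
    by (simp add: mat_tpow_image_sublevel[OF _ E t])
  also have "\<dots> = \<bar>det (mat_tpow t E)\<bar> * measure lebesgue {x. P x \<le> r}"
    using measure_linear_image_cart[OF matrix_vector_mul_linear lmeasurable_compact[OF compact_sublevel[OF ph E]]]
    by simp
  finally show ?thesis .
qed

lemma measure_sublevel_strict_mono:
  fixes P :: "real^'n \<Rightarrow> real"
  assumes ph: "positive_homogeneous P" and E: "E \<in> Exps P" and "0 \<le> r" "r < r'"
  shows "measure lebesgue {x. P x \<le> r} < measure lebesgue {x. P x \<le> r'}"
proof -
  have cont: "continuous_on UNIV P" and pd: "pos_definite P"
    using ph unfolding positive_homogeneous_def by auto
  define c where "c = (r + r') / 2"
  obtain v :: "real^'n" where "v \<noteq> 0"
    using vector_choose_size[of 1] by force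
  then have "P v > 0"
    using pd unfolding pos_definite_def by (metis less_eq_real_def)
  define x0 where "x0 = mat_tpow (c / P v) E *v v"
  have "P x0 = c"
    using Exps_scale[OF E, of "c / P v" v] \<open>P v > 0\<close> \<open>0 \<le> r\<close> \<open>r < r'\<close>
    by (simp add: x0_def c_def)
  have "isCont P x0"
    using cont by (simp add: continuous_on_eq_continuous_at)
  then obtain \<rho> where "\<rho> > 0" and \<rho>: "\<And>x. dist x x0 < \<rho> \<Longrightarrow> dist (P x) (P x0) < (r' - r) / 2"
    using \<open>r < r'\<close> unfolding continuous_at_eps_delta by (metis half_gt_zero diff_gt_0_iff_gt)
  have ball_between: "r < P x \<and> P x \<le> r'" if "x \<in> ball x0 \<rho>" for x
  proof -
    have "\<bar>P x - c\<bar> < (r' - r) / 2"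
      using \<rho>[of x] that \<open>P x0 = c\<close> by (simp add: dist_real_def dist_commute)
    then show ?thesis
      by (auto simp: c_def abs_less_iff field_simps)
  qed
  have fm: "{x. P x \<le> s} \<in> fmeasurable lebesgue" for s
    using lmeasurable_compact[OF compact_sublevel[OF ph E]] by simp
  have "0 < measure lebesgue (ball x0 \<rho>)"
    using content_ball_pos[OF \<open>\<rho> > 0\<close>, of x0] by (simp add: measure_completion)
  moreover have "measure lebesgue {x. P x \<le> r} + measure lebesgue (ball x0 \<rho>)
          = measure lebesgue ({x. P x \<le> r} \<union> ball x0 \<rho>)"
    using measure_Un2[OF fm, of "ball x0 \<rho>"] ball_between
    by (simp add: Diff_triv disjoint_iff not_le)
  moreover have "\<dots> \<le> measure lebesgue {x. P x \<le> r'}"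
    using ball_between \<open>r < r'\<close> fm by (intro measure_mono_fmeasurable) auto
  ultimately show ?thesis
    by linarith
qed

lemma measure_sublevel_pos:
  fixes P :: "real^'n \<Rightarrow> real"
  assumes "positive_homogeneous P" and "E \<in> Exps P" and "r > 0"
  shows "measure lebesgue {x. P x \<le> r} > 0"
  by (rule le_less_trans[OF measure_nonneg measure_sublevel_strict_mono[OF assms(1,2) order.refl assms(3)]])

lemma multiplicative_eq_exp:
  fixes f :: "real \<Rightarrow> real"
  assumes mult: "\<And>x y. f (x + y) = f x * f y" and f0: "f 0 = 1"
    and f': "(f has_field_derivative c) (at 0)"
  shows "f x = exp (c * x)"
proof -
  have deriv: "(f has_field_derivative f x * c) (at x)" for x
  proof -
    have "((\<lambda>h. f x * f h) has_field_derivative f x * c) (at 0)"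
      by (rule DERIV_cmult[OF f'])
    then show ?thesis
      using DERIV_shift[of f "f x * c" 0 x] by (simp add: mult mult.commute)
  qed
  have "((\<lambda>x. f x * exp (- (c * x))) has_field_derivative 0) (at x)" for x
    by (auto intro!: derivative_eq_intros deriv simp: algebra_simps)
  then have "f x * exp (- (c * x)) = f 0 * exp (- (c * 0))"
    by (intro DERIV_isconst_all) auto
  then show ?thesis
    by (simp add: f0 exp_minus field_simps)
qed

lemma measure_sublevel_powr:
  fixes P :: "real^'n \<Rightarrow> real"
  assumes ph: "positive_homogeneous P" and E: "E \<in> Exps P" and "t > 0"
  shows "measure lebesgue {x. P x \<le> t} = t powr trace E * measure lebesgue {x. P x \<le> 1}"
proof -
  define m where "m r = measure lebesgue {x. P x \<le> r}" for r
  have "m 1 > 0"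
    unfolding m_def by (rule measure_sublevel_pos[OF ph E zero_less_one])
  define f where "f s = m (exp s) / m 1" for s
  have f_eq: "f s = \<bar>det (mat_exp (s *\<^sub>R E))\<bar>" for s
    using measure_sublevel_scale[OF ph E exp_gt_zero, of s 1] \<open>m 1 > 0\<close>
    by (simp add: f_def m_def mat_tpow_def)
  \<comment> \<open>multiplicativity of \<open>f\<close> comes from the measures, not from \<open>exp((x+y)E) = exp(xE) exp(yE)\<close>\<close>
  have "f (x + y) = f x * f y" for x y
    using measure_sublevel_scale[OF ph E exp_gt_zero, of x "exp y"] f_eq[of x] \<open>m 1 > 0\<close>
    by (simp add: f_def m_def mat_tpow_def exp_add)
  moreover have "f 0 = 1"
    using \<open>m 1 > 0\<close> by (simp add: f_def)
  moreover have "(f has_field_derivative trace E) (at 0)"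
    unfolding f_eq by (rule has_field_derivative_abs_det_mat_exp)
  ultimately have "f (ln t) = exp (trace E * ln t)"
    by (rule multiplicative_eq_exp)
  then have "m t = exp (trace E * ln t) * m 1"
    using \<open>t > 0\<close> \<open>m 1 > 0\<close> by (simp add: f_def field_simps)
  then show ?thesis
    using \<open>t > 0\<close> by (simp add: m_def powr_def mult.commute)
qed

theorem mainTheorem2:
  fixes P :: "real^'n \<Rightarrow> real" and E1 E2 :: "real^'n^'n"
  assumes "positive_homogeneous P"
    and "E1 \<in> Exps P" and "E2 \<in> Exps P"
  shows "trace E1 = trace E2 \<and> trace E1 > 0"
proof -
  let ?m = "\<lambda>r. measure lebesgue {x. P x \<le> r}"
  have "0 < ?m 1"
    using measure_sublevel_pos[OF assms(1,2)] by simp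
  moreover have "?m 1 < ?m 2"
    using measure_sublevel_strict_mono[OF assms(1,2)] by simp
  moreover have "?m 2 = 2 powr trace E1 * ?m 1" and "?m 2 = 2 powr trace E2 * ?m 1"
    using measure_sublevel_powr[OF assms(1,2), of 2] measure_sublevel_powr[OF assms(1,3), of 2]
    by simp_all
  ultimately have "2 powr trace E1 = 2 powr trace E2" and "1 < 2 powr trace E1"
    by simp_all
  then show ?thesis
    using powr_less_cancel_iff[of 2 0 "trace E1"] by (simp add: powr_inj)
qed

end
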